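(* Every full submagma of an equidecomposable magma $M$ is closed (as a subset of $M$).
   Context: A magma is a set with a binary operation $+$; it is equidecomposable if $x+y=x'+y'$ implies $x=x'$ and $y=y'$. A magma $N$ is full if every element of $N$ can be written as $x+y$ with $x,y\in N$. A subset $X$ of a magma $M$ is closed if $x+y\in X$ (with $x,y\in M$) implies $x,y\in X$. *)

theory Defs
  imports Main
begin

definition equidecomposable :: "('a \<Rightarrow> 'a \<Rightarrow> 'a) \<Rightarrow> bool" where
  "equidecomposable p \<longleftrightarrow> (\<forall>x y x' y'. p x y = p x' y' \<longrightarrow> x = x' \<and> y = y')"

definition submagma :: "('a \<Rightarrow> 'a \<Rightarrow> 'a) \<Rightarrow> 'a set \<Rightarrow> bool" where
  "submagma p N \<longleftrightarrow> (\<forall>x\<in>N. \<forall>y\<in>N. p x y \<in> N)"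

definition full :: "('a \<Rightarrow> 'a \<Rightarrow> 'a) \<Rightarrow> 'a set \<Rightarrow> bool" where
  "full p N \<longleftrightarrow> (\<forall>z\<in>N. \<exists>x\<in>N. \<exists>y\<in>N. z = p x y)"

definition closed_subset :: "('a \<Rightarrow> 'a \<Rightarrow> 'a) \<Rightarrow> 'a set \<Rightarrow> bool" where
  "closed_subset p X \<longleftrightarrow> (\<forall>x y. p x y \<in> X \<longrightarrow> x \<in> X \<and> y \<in> X)"

end

theory Submission
  imports Defs
begin

lemma equidecomposableD:
  assumes "equidecomposable p" and "p x y = p x' y'"
  shows "x = x'" and "y = y'"
  using assms unfolding equidecomposable_def by blast+

lemma closed_subset_if_full:
  assumes equi: "equidecomposable p" and "full p N"
  shows "closed_subset p N"
  unfolding closed_subset_def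
proof (intro allI impI)
  fix x y
  assume "p x y \<in> N"
  then obtain a b where "a \<in> N" "b \<in> N" and sum_eq: "p x y = p a b"
    using \<open>full p N\<close> unfolding full_def by blast
  with equidecomposableD[OF equi sum_eq] show "x \<in> N \<and> y \<in> N"
    by simp
qed

theorem lemma5p9:
  fixes p :: "'a \<Rightarrow> 'a \<Rightarrow> 'a" and N :: "'a set"
  assumes "equidecomposable p" and "submagma p N" and "full p N"
  shows "closed_subset p N"
  using assms(1,3) by (rule closed_subset_if_full)

end
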